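(* For every integer $n\ge 0$ let $\mathcal P_n$ be the complex vector space of polynomials $p(\xi_1,\ldots,\xi_n|\eta_1,\ldots,\eta_n)$ that are homogeneous of weighted degree $n$, where the variables $\xi_i$ and $\eta_i$ are assigned weight $i$, and that satisfy the following condition: for every integer $N\ge0$ and every $k\in\frac12\mathbb Z$ with $N/2+k$ and $N/2-k$ non-negative integers, the polynomials $$P^{[p]}_{N,k}(X|Y)=p\bigl(S_1(X),\ldots,S_n(X)\,\big|\,S_1(Y),\ldots,S_n(Y)\bigr),\qquad X=(x_1,\ldots,x_{N/2+k}),\ Y=(y_1,\ldots,y_{N/2-k}),$$ where $S_r(X)=\sum_i x_i^r$ denotes the $r$-th power sum, satisfy $$P^{[p]}_{N+2,k}(X,-x\,|\,x,Y)=P^{[p]}_{N,k}(X|Y)$$ identically in all variables (on the left, the first group of variables is $(x_1,\ldots,x_{N/2+k},-x)$ and the second is $(x,y_1,\ldots,y_{N/2-k})$). Then $$\sum_{n=0}^\infty q^n\dim\mathcal P_n=\prod_{k=1}^\infty\frac1{1-q^k}.$$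
   Context: The right-hand side is the generating function of the number of integer partitions, i.e. the character of the Fock module of a single Heisenberg algebra. *)

theory Defs
  imports Complex_Main "HOL-Computational_Algebra.Formal_Power_Series" "HOL-Library.Function_Algebras"
begin

text \<open>A monomial in \<xi>_1..\<xi>_n, \<eta>_1..\<eta>_n is a pair (a,b) of exponent functions;
  a i is the exponent of \<xi>_i and b i that of \<eta>_i.\<close>
type_synonym monom = "(nat \<Rightarrow> nat) \<times> (nat \<Rightarrow> nat)"

definition wmonoms :: "nat \<Rightarrow> monom set" where
  "wmonoms n = {(a, b). (\<forall>i. i \<notin> {1..n} \<longrightarrow> a i = 0 \<and> b i = 0) \<and>
                        (\<Sum>i=1..n. i * (a i + b i)) = n}"

definition psum :: "nat \<Rightarrow> complex list \<Rightarrow> complex" where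
  "psum r X = (\<Sum>x\<leftarrow>X. x ^ r)"

text \<open>A weighted-homogeneous polynomial of degree n is a coefficient function supported on
  wmonoms n. Evaluation of p at \<xi>_i = S_i(X), \<eta>_i = S_i(Y):  P^[p](X|Y).\<close>
definition Pev :: "nat \<Rightarrow> (monom \<Rightarrow> complex) \<Rightarrow> complex list \<Rightarrow> complex list \<Rightarrow> complex" where
  "Pev n p X Y = (\<Sum>m\<in>wmonoms n. p m *
      (\<Prod>i=1..n. psum i X ^ fst m i * psum i Y ^ snd m i))"

text \<open>The space P_n. The pair (N,k) with N/2+k, N/2-k natural corresponds exactly to the
  pair of lengths (length X, length Y), which range over all pairs of naturals.\<close>
definition Pspace :: "nat \<Rightarrow> (monom \<Rightarrow> complex) set" where
  "Pspace n = {p. (\<forall>m. m \<notin> wmonoms n \<longrightarrow> p m = 0) \<and>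
     (\<forall>(N::nat) (k::real) X Y x. N / 2 + k \<in> \<nat> \<and> N / 2 - k \<in> \<nat> \<and>
        real (length X) = N / 2 + k \<and> real (length Y) = N / 2 - k \<longrightarrow>
        Pev n p (X @ [- x]) (x # Y) = Pev n p X Y)}"

definition cdim :: "('a \<Rightarrow> complex) set \<Rightarrow> nat" where
  "cdim V = Vector_Spaces.vector_space.dim (\<lambda>c f x. c * f x) V"

end

(* The relation P_{N+2,k}(X,-x | x,Y) = P_{N,k}(X | Y) lets one cancel pairs (-z | z) of
   variables. Since every finite family of complex numbers is the family of power sums of some
   list, this shows p(xi | eta) = p(xi_i - (-1)^i eta_i | 0) for p in P_n, so p is determined by
   its coefficients of the monomials in xi alone. Conversely the polynomials
   prod_i (xi_i - (-1)^i eta_i)^(a_i) with sum_i i a_i = n lie in P_n, because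
   S_i(-x) - (-1)^i S_i(x) = 0. Hence they form a basis of P_n indexed by the partitions of n,
   and the generating function of the partition numbers is prod_k 1/(1 - q^k). *)

theory Submission
  imports Defs "HOL-Computational_Algebra.Fundamental_Theorem_Algebra"
    "HOL-Computational_Algebra.Polynomial_FPS"
begin

unbundle fps_syntax

section \<open>Partitions and their generating function\<close>

text \<open>\<open>a i\<close> is the number of parts equal to \<open>i\<close> in a partition of \<open>n\<close> into parts \<open>\<le> m\<close>.\<close>
definition partition_mults :: "nat \<Rightarrow> nat \<Rightarrow> (nat \<Rightarrow> nat) set" where
  "partition_mults m n = {a. (\<forall>i. i \<notin> {1..m} \<longrightarrow> a i = 0) \<and> (\<Sum>i=1..m. i * a i) = n}"

lemma partition_mults_le:
  assumes "a \<in> partition_mults m n"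
  shows "a i \<le> n"
proof (cases "i \<in> {1..m}")
  case True
  then have "a i \<le> i * a i" by simp
  also have "\<dots> \<le> (\<Sum>i=1..m. i * a i)" using True by (intro member_le_sum) auto
  finally show ?thesis using assms by (simp add: partition_mults_def)
qed (use assms in \<open>simp add: partition_mults_def\<close>)

lemma finite_bounded_funs: "finite {a :: nat \<Rightarrow> nat. \<forall>i. a i \<le> n \<and> (i \<notin> {1..m} \<longrightarrow> a i = 0)}"
  by (rule finite_subset[OF _ finite_set_of_finite_funs[of "{1..m}" "{..n}" 0]]) auto

lemma finite_partition_mults: "finite (partition_mults m n)"
  by (rule finite_subset[OF _ finite_bounded_funs[of n m]])
     (auto simp: partition_mults_le, auto simp: partition_mults_def)

lemma partition_mults_0: "partition_mults 0 n = (if n = 0 then {\<lambda>_. 0} else {})"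
  by (auto simp: partition_mults_def)

lemma partition_mults_Suc:
  "partition_mults (Suc m) n = partition_mults m n \<union>
     (if Suc m \<le> n then (\<lambda>b. b(Suc m := Suc (b (Suc m)))) ` partition_mults (Suc m) (n - Suc m)
      else {})" (is "?L = ?A \<union> ?B")
proof -
  have weight: "(\<Sum>i=1..Suc m. i * (b(Suc m := k)) i) = (\<Sum>i=1..m. i * b i) + Suc m * k"
    for b :: "nat \<Rightarrow> nat" and k
    by (simp add: sum.cong[of _ _ "\<lambda>i. i * (b(Suc m := k)) i" "\<lambda>i. i * b i"])
  have supp: "(\<forall>i. i \<notin> {1..Suc m} \<longrightarrow> b i = 0) \<longleftrightarrow> (\<forall>i. i \<notin> {1..m} \<longrightarrow> (b(Suc m := 0)) i = 0)"
    for b :: "nat \<Rightarrow> nat"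
    by (auto simp: le_Suc_eq)
  show ?thesis
  proof (intro equalityI subsetI)
    fix a assume a: "a \<in> ?L"
    show "a \<in> ?A \<union> ?B"
    proof (cases "a (Suc m)")
      case 0
      then have "a(Suc m := 0) = a" by auto
      then show ?thesis using a weight[of a 0] supp[of a] by (auto simp: partition_mults_def)
    next
      case (Suc k)
      define b where "b = a(Suc m := k)"
      have "a = b(Suc m := Suc (b (Suc m)))" using Suc by (auto simp: b_def)
      moreover have "b \<in> partition_mults (Suc m) (n - Suc m)" "Suc m \<le> n"
        using a weight[of a k] weight[of a "Suc k"] supp[of a] supp[of b] Suc
        by (auto simp: partition_mults_def b_def)
      ultimately show ?thesis by auto
    qed
  next
    fix a assume "a \<in> ?A \<union> ?B"
    then show "a \<in> ?L"
      using weight supp by (fastforce simp: partition_mults_def split: if_splits)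
  qed
qed

lemma card_partition_mults_Suc:
  "card (partition_mults (Suc m) n) = card (partition_mults m n) +
     (if Suc m \<le> n then card (partition_mults (Suc m) (n - Suc m)) else 0)"
proof -
  let ?bump = "\<lambda>b::nat \<Rightarrow> nat. b(Suc m := Suc (b (Suc m)))"
  have "inj ?bump"
    by (rule injI) (metis fun_upd_idem_iff fun_upd_upd nat.inject)
  moreover have "partition_mults m n \<inter> ?bump ` B = {}" for B
    by (fastforce simp: partition_mults_def dest: spec[of _ "Suc m"])
  ultimately show ?thesis
    by (subst partition_mults_Suc)
       (simp add: card_Un_disjoint finite_partition_mults card_image inj_on_subset[of ?bump UNIV])
qed

lemma card_partition_mults_stable:
  assumes "n \<le> m"
  shows "card (partition_mults m n) = card (partition_mults n n)"
  using assms by (induction rule: dec_induct) (simp_all add: card_partition_mults_Suc)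

lemma fps_nth_from_mult_1_minus_X_power:
  assumes "f * (1 - fps_X ^ k) = (g :: 'a :: comm_ring_1 fps)"
  shows "f $ n = g $ n + (if n < k then 0 else f $ (n - k))"
  using arg_cong[OF assms, of "\<lambda>h. h $ n"]
  by (auto simp: right_diff_distrib fps_X_power_mult_right_nth algebra_simps)

lemma partition_product_nth:
  "(\<Prod>k=1..m. inverse (1 - fps_X ^ k :: 'a :: field fps)) $ n = of_nat (card (partition_mults m n))"
proof (induction m arbitrary: n)
  case 0
  then show ?case by (simp add: partition_mults_0)
next
  case (Suc m)
  let ?P = "\<lambda>m. \<Prod>k=1..m. inverse (1 - fps_X ^ k :: 'a fps)"
  have "inverse (1 - fps_X ^ Suc m :: 'a fps) * (1 - fps_X ^ Suc m) = 1"
    by (rule inverse_mult_eq_1) simp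
  then have recurrence: "?P (Suc m) * (1 - fps_X ^ Suc m) = ?P m"
    by (simp add: mult.assoc)
  show ?case
  proof (induction n rule: less_induct)
    case (less n)
    have "?P (Suc m) $ n = ?P m $ n + (if n < Suc m then 0 else ?P (Suc m) $ (n - Suc m))"
      by (rule fps_nth_from_mult_1_minus_X_power[OF recurrence])
    also have "\<dots> = of_nat (card (partition_mults (Suc m) n))"
    proof (cases "n < Suc m")
      case False
      then have "?P (Suc m) $ (n - Suc m) = of_nat (card (partition_mults (Suc m) (n - Suc m)))"
        by (intro less.IH) simp
      moreover have "card (partition_mults (Suc m) n) =
          card (partition_mults m n) + card (partition_mults (Suc m) (n - Suc m))"
        using False card_partition_mults_Suc[of m n] by simp
      ultimately show ?thesis using False Suc.IH[of n] by (simp del: prod.cl_ivl_Suc)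
    qed (use Suc.IH[of n] card_partition_mults_Suc[of m n] in simp)
    finally show ?case .
  qed
qed

lemma partition_product_tendsto:
  "(\<lambda>m. \<Prod>k=1..m. inverse (1 - fps_X ^ k :: 'a :: field fps))
     \<longlonglongrightarrow> Abs_fps (\<lambda>n. of_nat (card (partition_mults n n)))"
proof (rule tendsto_fpsI)
  fix n
  show "\<forall>\<^sub>F m in sequentially. (\<Prod>k=1..m. inverse (1 - fps_X ^ k :: 'a fps)) $ n =
          Abs_fps (\<lambda>n. of_nat (card (partition_mults n n))) $ n"
    using eventually_ge_at_top[of n]
  proof eventually_elim
    case (elim m)
    then show ?case using partition_product_nth[of m n] card_partition_mults_stable[OF elim] by simp
  qed
qed

section \<open>Power sums can take arbitrary values\<close>

lemma psum_append: "psum i (X @ Y) = psum i X + psum i Y"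
  by (simp add: psum_def)

lemma psum_Cons: "psum i (x # Y) = x ^ i + psum i Y"
  by (simp add: psum_def)

lemma psum_Nil: "psum i [] = 0"
  by (simp add: psum_def)

lemma psum_map_uminus: "psum i (map uminus Z) = (-1) ^ i * psum i Z"
proof (induction Z)
  case (Cons z Z)
  have "(- z) ^ i = (-1) ^ i * z ^ i" by (rule power_minus)
  then show ?case using Cons by (simp add: psum_Cons distrib_left)
qed (simp add: psum_Nil)

definition elem_sym_fps :: "'a :: comm_ring_1 list \<Rightarrow> 'a fps" where
  "elem_sym_fps X = (\<Prod>x\<leftarrow>X. 1 + fps_const x * fps_X)"

definition signed_psum_fps :: "complex list \<Rightarrow> complex fps" where
  "signed_psum_fps X = Abs_fps (\<lambda>r. if r = 0 then 0 else (-1) ^ (r - 1) * psum r X)"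

lemma signed_psum_fps_Cons: "signed_psum_fps (x # X) = signed_psum_fps [x] + signed_psum_fps X"
  by (rule fps_ext) (simp add: signed_psum_fps_def psum_def algebra_simps)

lemma signed_psum_fps_single:
  "(1 + fps_const x * fps_X) * signed_psum_fps [x] = fps_const x * fps_X"
proof (rule fps_ext)
  fix n
  show "((1 + fps_const x * fps_X) * signed_psum_fps [x]) $ n = (fps_const x * fps_X) $ n"
    by (cases n; cases "n - 1") (auto simp: signed_psum_fps_def psum_def algebra_simps)
qed

lemma elem_sym_fps_Cons: "elem_sym_fps (x # X) = (1 + fps_const x * fps_X) * elem_sym_fps X"
  by (simp add: elem_sym_fps_def)

lemma elem_sym_fps_nth_0: "elem_sym_fps X $ 0 = 1"
  by (induction X) (simp_all add: elem_sym_fps_Cons, simp add: elem_sym_fps_def)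

lemma newton_identities:
  "fps_X * fps_deriv (elem_sym_fps X) = elem_sym_fps X * signed_psum_fps X"
proof (induction X)
  case Nil
  then show ?case by (simp add: elem_sym_fps_def signed_psum_fps_def psum_def fps_eq_iff)
next
  case (Cons x X)
  let ?a = "1 + fps_const x * fps_X" and ?E = "elem_sym_fps X" and ?P = "signed_psum_fps X"
  have "fps_X * fps_deriv (elem_sym_fps (x # X)) = fps_X * (?a * fps_deriv ?E + fps_const x * ?E)"
    by (simp add: elem_sym_fps_Cons)
  also have "\<dots> = ?a * (fps_X * fps_deriv ?E) + fps_const x * fps_X * ?E"
    by (simp add: algebra_simps)
  also have "\<dots> = ?a * ?E * ?P + ?E * (?a * signed_psum_fps [x])"
    by (simp only: Cons signed_psum_fps_single) (simp add: algebra_simps)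
  also have "\<dots> = elem_sym_fps (x # X) * signed_psum_fps (x # X)"
    by (simp add: elem_sym_fps_Cons signed_psum_fps_Cons[of x X] algebra_simps)
  finally show ?case .
qed

lemma log_deriv_nth_eq:
  fixes A B P Q :: "'a :: comm_ring_1 fps"
  assumes "fps_X * fps_deriv A = A * P" and "fps_X * fps_deriv B = B * Q"
    and "A $ 0 = 1" and "B $ 0 = 1" and "\<forall>k\<le>n. A $ k = B $ k" and "r \<le> n"
  shows "P $ r = Q $ r"
  using \<open>r \<le> n\<close>
proof (induction r rule: less_induct)
  case (less r)
  have recursion: "P $ r = of_nat r * A $ r - (\<Sum>i=1..r. A $ i * P $ (r - i))"
    if "fps_X * fps_deriv A = A * P" "A $ 0 = 1" for A P :: "'a fps"
  proof -
    have "of_nat r * A $ r = (A * P) $ r"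
      using arg_cong[OF that(1), of "\<lambda>f. f $ r"] by (cases r) simp_all
    also have "\<dots> = P $ r + (\<Sum>i=1..r. A $ i * P $ (r - i))"
      by (simp add: fps_mult_nth sum.atLeast_Suc_atMost that(2))
    finally show ?thesis by (simp add: algebra_simps)
  qed
  have "(\<Sum>i=1..r. A $ i * P $ (r - i)) = (\<Sum>i=1..r. B $ i * Q $ (r - i))"
    using less assms(5) by (intro sum.cong refl) auto
  then show ?case
    using recursion[OF assms(1,3)] recursion[OF assms(2,4)] assms(5) less.prems by simp
qed

lemma reflect_poly_linear: "reflect_poly [:a, 1:] = [:1, a :: 'a :: comm_ring_1:]"
  by (cases "a = 0") (simp_all add: reflect_poly_def cCons_def)

lemma fps_of_poly_eq_elem_sym_fps:
  fixes q :: "complex poly"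
  assumes "coeff q 0 = 1"
  obtains X where "fps_of_poly q = elem_sym_fps X"
proof -
  \<comment> \<open>The reflection of \<open>q\<close> is monic, and its linear factors \<open>X - x\<close> reflect back to \<open>1 - x X\<close>.\<close>
  define r where "r = reflect_poly q"
  have q: "q = reflect_poly r" using assms by (simp add: r_def)
  have "lead_coeff r = 1" using coeff_0_reflect_poly[of r] assms by (simp add: q[symmetric])
  obtain rs where rs: "mset rs = proots r" using ex_mset by blast
  have "r = (\<Prod>x\<leftarrow>rs. [:-x, 1:])"
    using complex_poly_decompose_multiset[of r] \<open>lead_coeff r = 1\<close> rs
    by (simp add: prod_mset_prod_list[symmetric])
  then have "q = (\<Prod>x\<leftarrow>rs. [:1, -x:])"
    by (simp add: q reflect_poly_prod_list o_def reflect_poly_linear)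
  then have "fps_of_poly q = elem_sym_fps (map uminus rs)"
    by (simp add: elem_sym_fps_def fps_of_poly_prod_list o_def fps_of_poly_linear')
  then show ?thesis by (rule that)
qed

lemma power_sums_surj: "\<exists>X. \<forall>r\<in>{1..n}. psum r X = s r"
proof -
  define t where "t = Abs_fps (\<lambda>r. if r = 0 then 0 else (-1) ^ (r - 1) * s r)"
  \<comment> \<open>\<open>E = exp (\<Sum>r. t\<^sub>r X\<^sup>r / r)\<close> has logarithmic derivative \<open>t\<close>; \<open>X\<close> is read off from the roots
    of its truncation at degree \<open>n\<close>.\<close>
  define T where "T = Abs_fps (\<lambda>r. t $ r / of_nat r)"
  define E where "E = fps_exp 1 oo T"
  have T0: "T $ 0 = 0" by (simp add: T_def)
  have "fps_X * fps_deriv T = t" by (simp add: fps_eq_iff T_def t_def)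
  moreover have "fps_X * fps_deriv E = E * (fps_X * fps_deriv T)"
    by (simp add: E_def fps_compose_deriv[OF T0] mult_ac)
  ultimately have E_ode: "fps_X * fps_deriv E = E * t" by simp
  have E0: "E $ 0 = 1" by (simp add: E_def)
  define q where "q = (\<Sum>k\<le>n. monom (E $ k) k)"
  have "coeff q 0 = 1" by (simp add: q_def coeff_sum E0)
  then obtain X where X: "fps_of_poly q = elem_sym_fps X"
    by (rule fps_of_poly_eq_elem_sym_fps)
  have agree: "\<forall>k\<le>n. elem_sym_fps X $ k = E $ k"
    by (simp add: X[symmetric] q_def coeff_sum)
  have "signed_psum_fps X $ r = t $ r" if "r \<le> n" for r
    by (rule log_deriv_nth_eq[OF newton_identities E_ode elem_sym_fps_nth_0 E0 agree that])
  then have "psum r X = s r" if "r \<in> {1..n}" for r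
    using that by (force simp: signed_psum_fps_def t_def)
  then show ?thesis by blast
qed

section \<open>Polynomial functions determine their coefficients\<close>

lemma polyfun_eq_0_imp_coeff_eq_0:
  fixes A :: "nat \<Rightarrow> 'a :: {ring_char_0, comm_ring_1, ring_no_zero_divisors}"
  assumes "finite K" and "\<And>t. (\<Sum>k\<in>K. A k * t ^ k) = 0" and "k \<in> K"
  shows "A k = 0"
proof -
  define p where "p = (\<Sum>k\<in>K. monom (A k) k)"
  have "\<forall>t. poly p t = 0" using assms(2) by (simp add: p_def poly_sum poly_monom)
  then have "coeff p k = 0" by (simp add: poly_all_0_iff_0)
  then show ?thesis using assms(1,3) by (simp add: p_def coeff_sum coeff_monom)
qed

lemma polyfun_eq_0_imp_coeff_polyfun_eq_0:
  fixes c :: "('i \<Rightarrow> nat) \<Rightarrow> 'a :: {ring_char_0, comm_ring_1, ring_no_zero_divisors}"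
  assumes "finite I" and "j \<notin> I" and "finite M"
    and zero: "\<forall>z. (\<Sum>e\<in>M. c e * (\<Prod>i\<in>insert j I. z i ^ e i)) = 0"
  shows "(\<Sum>e\<in>{e\<in>M. e j = k}. c e * (\<Prod>i\<in>I. z i ^ e i)) = 0"
proof -
  define K where "K = (\<lambda>e. e j) ` M"
  define A where "A k z = (\<Sum>e\<in>{e\<in>M. e j = k}. c e * (\<Prod>i\<in>I. z i ^ e i))" for k z
  have fK: "finite K" using assms by (simp add: K_def)
  have A_indep: "A k (z(j := t)) = A k z" for k z t
    unfolding A_def using assms by (intro sum.cong refl arg_cong2[where f="(*)"] prod.cong) auto
  have split: "(\<Sum>e\<in>M. c e * (\<Prod>i\<in>insert j I. z i ^ e i)) = (\<Sum>k\<in>K. A k z * z j ^ k)" for z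
  proof -
    have "(\<Sum>e\<in>M. c e * (\<Prod>i\<in>insert j I. z i ^ e i)) =
          (\<Sum>k\<in>K. \<Sum>e\<in>{e\<in>M. e j = k}. c e * (\<Prod>i\<in>insert j I. z i ^ e i))"
      by (rule sum.group[symmetric]) (use assms fK in \<open>auto simp: K_def\<close>)
    also have "\<dots> = (\<Sum>k\<in>K. A k z * z j ^ k)"
      unfolding A_def sum_distrib_right
      by (intro sum.cong refl) (use assms in \<open>auto simp: mult_ac\<close>)
    finally show ?thesis .
  qed
  show ?thesis
  proof (cases "k \<in> K")
    case True
    have "A k z = 0"
    proof (rule polyfun_eq_0_imp_coeff_eq_0[OF fK _ True])
      show "(\<Sum>k\<in>K. A k z * t ^ k) = 0" for t
        using zero[rule_format, of "z(j := t)"] unfolding split A_indep by simp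
    qed
    then show ?thesis by (simp add: A_def)
  next
    case False
    then have none: "{e\<in>M. e j = k} = {}" by (auto simp: K_def)
    show ?thesis unfolding none by simp
  qed
qed

lemma multivariate_polyfun_eq_0_imp_coeff_eq_0:
  fixes c :: "('i \<Rightarrow> nat) \<Rightarrow> 'a :: {ring_char_0, comm_ring_1, ring_no_zero_divisors}"
  assumes "finite I" and "finite M" and "\<forall>e\<in>M. \<forall>i. i \<notin> I \<longrightarrow> e i = 0"
    and "\<forall>z. (\<Sum>e\<in>M. c e * (\<Prod>i\<in>I. z i ^ e i)) = 0" and "e \<in> M"
  shows "c e = 0"
  using assms
proof (induction I arbitrary: M c e rule: finite_induct)
  case empty
  then have "M = {e}" by (auto simp: fun_eq_iff) metis
  then show ?case using empty by simp
next
  case (insert j I M c e)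
  define k where "k = e j"
  define M' where "M' = (\<lambda>e. e(j := 0)) ` {e\<in>M. e j = k}"
  have inj: "inj_on (\<lambda>e. e(j := 0)) {e\<in>M. e j = k}"
    by (rule inj_onI) (metis (mono_tags, lifting) fun_upd_idem_iff fun_upd_upd mem_Collect_eq)
  have "c ((e(j := 0))(j := k)) = 0"
  proof (rule insert.IH[where M = M' and c = "\<lambda>e'. c (e'(j := k))", simplified])
    show "finite M'" using insert by (simp add: M'_def)
    show "\<forall>e\<in>M'. \<forall>i. i \<notin> I \<longrightarrow> e i = 0" using insert by (auto simp: M'_def)
    show "e(j := 0) \<in> M'" using insert by (auto simp: M'_def k_def)
    show "\<forall>z. (\<Sum>e\<in>M'. c (e(j := k)) * (\<Prod>i\<in>I. z i ^ e i)) = 0"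
    proof
      fix z
      have "(\<Sum>e\<in>M'. c (e(j := k)) * (\<Prod>i\<in>I. z i ^ e i)) =
            (\<Sum>e\<in>{e\<in>M. e j = k}. c ((e(j := 0))(j := k)) * (\<Prod>i\<in>I. z i ^ (e(j := 0)) i))"
        unfolding M'_def by (rule sum.reindex[OF inj, unfolded comp_def])
      also have "\<dots> = (\<Sum>e\<in>{e\<in>M. e j = k}. c e * (\<Prod>i\<in>I. z i ^ e i))"
        using insert
        by (intro sum.cong refl arg_cong2[where f="(*)"] prod.cong) (auto intro!: arg_cong[where f=c])
      also have "\<dots> = 0"
        using insert by (intro polyfun_eq_0_imp_coeff_polyfun_eq_0) auto
      finally show "(\<Sum>e\<in>M'. c (e(j := k)) * (\<Prod>i\<in>I. z i ^ e i)) = 0" .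
    qed
  qed
  then show ?case by (simp add: k_def)
qed

section \<open>The space \<open>P\<^sub>n\<close>\<close>

definition peval :: "nat \<Rightarrow> (monom \<Rightarrow> complex) \<Rightarrow> (nat \<Rightarrow> complex) \<Rightarrow> (nat \<Rightarrow> complex) \<Rightarrow> complex"
  where "peval n p \<xi> \<eta> = (\<Sum>m\<in>wmonoms n. p m * (\<Prod>i=1..n. \<xi> i ^ fst m i * \<eta> i ^ snd m i))"

lemma Pev_eq_peval: "Pev n p X Y = peval n p (\<lambda>i. psum i X) (\<lambda>i. psum i Y)"
  by (simp add: Pev_def peval_def)

lemma peval_cong:
  assumes "\<And>i. i \<in> {1..n} \<Longrightarrow> \<xi> i = \<xi>' i" and "\<And>i. i \<in> {1..n} \<Longrightarrow> \<eta> i = \<eta>' i"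
  shows "peval n p \<xi> \<eta> = peval n p \<xi>' \<eta>'"
  unfolding peval_def using assms by (intro sum.cong refl arg_cong2[where f="(*)"] prod.cong) auto

lemma wmonoms_imp_partition_mults: "(a, b) \<in> wmonoms n \<Longrightarrow> (\<lambda>i. a i + b i) \<in> partition_mults n n"
  by (simp add: wmonoms_def partition_mults_def)

lemma pure_mem_wmonoms_iff: "(a, \<lambda>_. 0) \<in> wmonoms n \<longleftrightarrow> a \<in> partition_mults n n"
  by (simp add: wmonoms_def partition_mults_def)

lemma finite_wmonoms: "finite (wmonoms n)"
proof (rule finite_subset)
  let ?F = "{a :: nat \<Rightarrow> nat. \<forall>i. a i \<le> n \<and> (i \<notin> {1..n} \<longrightarrow> a i = 0)}"
  show "wmonoms n \<subseteq> ?F \<times> ?F"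
  proof
    fix m assume m: "m \<in> wmonoms n"
    obtain a b where ab: "m = (a, b)" by (cases m)
    have "a i + b i \<le> n" for i
      using partition_mults_le[OF wmonoms_imp_partition_mults] m ab by blast
    moreover have "i \<notin> {1..n} \<Longrightarrow> a i = 0 \<and> b i = 0" for i
      using m ab by (simp add: wmonoms_def)
    ultimately show "m \<in> ?F \<times> ?F" using ab by (auto dest: add_leD1 add_leD2)
  qed
  show "finite (?F \<times> ?F)" using finite_bounded_funs by blast
qed

lemma Pspace_iff:
  "p \<in> Pspace n \<longleftrightarrow> (\<forall>m. m \<notin> wmonoms n \<longrightarrow> p m = 0) \<and>
     (\<forall>X Y x. Pev n p (X @ [- x]) (x # Y) = Pev n p X Y)"
proof
  assume p: "p \<in> Pspace n"
  have "Pev n p (X @ [- x]) (x # Y) = Pev n p X Y" for X Y x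
  proof -
    define N where "N = length X + length Y"
    define k where "k = (real (length X) - real (length Y)) / 2"
    have "real N / 2 + k = real (length X)" "real N / 2 - k = real (length Y)"
      by (simp_all add: N_def k_def field_simps)
    then show ?thesis
      using p unfolding Pspace_def by (auto simp del: of_nat_add) (metis of_nat_in_Nats)
  qed
  then show "(\<forall>m. m \<notin> wmonoms n \<longrightarrow> p m = 0) \<and> (\<forall>X Y x. Pev n p (X @ [- x]) (x # Y) = Pev n p X Y)"
    using p by (simp add: Pspace_def)
qed (simp add: Pspace_def)

lemma Pev_cancel_pairs:
  assumes "p \<in> Pspace n"
  shows "Pev n p (map uminus Z @ X) (Z @ Y) = Pev n p X Y"
proof (induction Z)
  case (Cons z Z)
  have "Pev n p (map uminus (z # Z) @ X) ((z # Z) @ Y) =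
      Pev n p ((map uminus Z @ X) @ [- z]) (z # (Z @ Y))"
    unfolding Pev_eq_peval by (simp add: psum_append psum_Cons psum_Nil algebra_simps)
  also have "\<dots> = Pev n p (map uminus Z @ X) (Z @ Y)"
    by (rule conjunct2[OF assms[unfolded Pspace_iff], rule_format])
  finally show ?case using Cons by simp
qed simp

text \<open>Realise \<open>(\<xi>, \<eta>)\<close> as the power sums of \<open>(-Z @ X | Z)\<close> and cancel the pairs \<open>(-z | z)\<close>.\<close>
lemma peval_Pspace_eq:
  assumes "p \<in> Pspace n"
  shows "peval n p \<xi> \<eta> = peval n p (\<lambda>i. \<xi> i - (-1) ^ i * \<eta> i) (\<lambda>_. 0)"
proof -
  obtain Z where Z: "\<forall>r\<in>{1..n}. psum r Z = \<eta> r" using power_sums_surj by blast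
  obtain X where X: "\<forall>r\<in>{1..n}. psum r X = \<xi> r - (-1) ^ r * \<eta> r"
    using power_sums_surj[of n "\<lambda>r. \<xi> r - (-1) ^ r * \<eta> r"] by blast
  have "peval n p \<xi> \<eta> = Pev n p (map uminus Z @ X) (Z @ [])"
    unfolding Pev_eq_peval using X Z by (intro peval_cong) (auto simp: psum_append psum_map_uminus)
  also have "\<dots> = Pev n p X []" by (rule Pev_cancel_pairs[OF assms])
  also have "\<dots> = peval n p (\<lambda>i. \<xi> i - (-1) ^ i * \<eta> i) (\<lambda>_. 0)"
    unfolding Pev_eq_peval using X by (intro peval_cong) (simp_all add: psum_Nil)
  finally show ?thesis .
qed

lemma peval_eta_zero_eq_0:
  assumes "\<And>a. p (a, \<lambda>_. 0) = 0"
  shows "peval n p \<xi> (\<lambda>_. 0) = 0"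
  unfolding peval_def
proof (intro sum.neutral ballI)
  fix m assume m: "m \<in> wmonoms n"
  show "p m * (\<Prod>i=1..n. \<xi> i ^ fst m i * 0 ^ snd m i) = 0"
  proof (cases "\<exists>i\<in>{1..n}. snd m i \<noteq> 0")
    case False
    obtain a b where ab: "m = (a, b)" by (cases m)
    have "b i = 0" for i
      using False m ab by (cases "i \<in> {1..n}") (auto simp: wmonoms_def)
    then have "m = (a, \<lambda>_. 0)" using ab by auto
    then show ?thesis using assms[of a] by simp
  next
    case True
    then obtain i where "i \<in> {1..n}" "snd m i \<noteq> 0" by blast
    then have "\<exists>i\<in>{1..n}. \<xi> i ^ fst m i * 0 ^ snd m i = 0" by (intro bexI[of _ i]) simp_all
    then have "(\<Prod>i=1..n. \<xi> i ^ fst m i * 0 ^ snd m i) = 0"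
      by (rule prod_zero[OF finite_atLeastAtMost])
    then show ?thesis by simp
  qed
qed

definition monom_exps :: "monom \<Rightarrow> nat + nat \<Rightarrow> nat" where
  "monom_exps m = case_sum (fst m) (snd m)"

lemma inj_monom_exps: "inj monom_exps"
  by (rule injI) (simp add: monom_exps_def prod_eq_iff fun_eq_iff, metis sum.case)

lemma monom_exps_Inl_Inr [simp]: "(monom_exps m \<circ> Inl, monom_exps m \<circ> Inr) = m"
  by (simp add: monom_exps_def o_def)

lemma prod_monom_exps:
  assumes "finite A"
  shows "(\<Prod>i\<in>Inl ` A \<union> Inr ` A. z i ^ monom_exps m i) =
    (\<Prod>i\<in>A. z (Inl i) ^ fst m i * z (Inr i) ^ snd m i)"
proof -
  have "(\<Prod>i\<in>Inl ` A \<union> Inr ` A. z i ^ monom_exps m i) =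
        (\<Prod>i\<in>Inl ` A. z i ^ monom_exps m i) * (\<Prod>i\<in>Inr ` A. z i ^ monom_exps m i)"
    by (rule prod.union_disjoint) (use assms in auto)
  then show ?thesis by (simp add: prod.reindex monom_exps_def prod.distrib)
qed

lemma peval_eq_0_imp_eq_0:
  assumes supp: "\<forall>m. m \<notin> wmonoms n \<longrightarrow> p m = 0" and zero: "\<And>\<xi> \<eta>. peval n p \<xi> \<eta> = 0"
  shows "p = 0"
proof
  fix m
  show "p m = 0 m"
  proof (cases "m \<in> wmonoms n")
    case True
    let ?I = "Inl ` {1..n} \<union> Inr ` {1..n} :: (nat + nat) set"
    have "p (monom_exps m \<circ> Inl, monom_exps m \<circ> Inr) = 0"
    proof (rule multivariate_polyfun_eq_0_imp_coeff_eq_0[of ?I "monom_exps ` wmonoms n"])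
      show "\<forall>e\<in>monom_exps ` wmonoms n. \<forall>i. i \<notin> ?I \<longrightarrow> e i = 0"
        by (auto simp: wmonoms_def monom_exps_def image_iff split: sum.split)
      show "\<forall>z. (\<Sum>e\<in>monom_exps ` wmonoms n. p (e \<circ> Inl, e \<circ> Inr) * (\<Prod>i\<in>?I. z i ^ e i)) = 0"
      proof
        fix z :: "nat + nat \<Rightarrow> complex"
        have "(\<Sum>e\<in>monom_exps ` wmonoms n. p (e \<circ> Inl, e \<circ> Inr) * (\<Prod>i\<in>?I. z i ^ e i)) =
              peval n p (z \<circ> Inl) (z \<circ> Inr)"
          by (simp add: sum.reindex inj_on_subset[OF inj_monom_exps] peval_def prod_monom_exps)
        then show "(\<Sum>e\<in>monom_exps ` wmonoms n. p (e \<circ> Inl, e \<circ> Inr) * (\<Prod>i\<in>?I. z i ^ e i)) = 0"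
          using zero by simp
      qed
    qed (use True finite_wmonoms in auto)
    then show ?thesis by simp
  next
    case False
    with supp have "p m = 0" by blast
    then show ?thesis by simp
  qed
qed

lemma Pspace_eq_0:
  assumes "p \<in> Pspace n" and "\<And>a. p (a, \<lambda>_. 0) = 0"
  shows "p = 0"
proof (rule peval_eq_0_imp_eq_0)
  show "\<forall>m. m \<notin> wmonoms n \<longrightarrow> p m = 0" using assms(1) by (simp add: Pspace_iff)
  show "peval n p \<xi> \<eta> = 0" for \<xi> \<eta>
    using peval_eta_zero_eq_0[of p, OF assms(2)] by (simp add: peval_Pspace_eq[OF assms(1)])
qed

text \<open>The coefficients of \<open>\<Prod>i. (\<xi>\<^sub>i - (-1)^i \<eta>\<^sub>i)^(a i)\<close>, see \<open>peval_basis_poly\<close>.\<close>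
definition basis_poly :: "nat \<Rightarrow> (nat \<Rightarrow> nat) \<Rightarrow> monom \<Rightarrow> complex" where
  "basis_poly n a m = (if m \<in> wmonoms n \<and> (\<forall>i. fst m i + snd m i = a i)
     then (\<Prod>i=1..n. of_nat (a i choose snd m i) * (- ((-1) ^ i)) ^ snd m i) else 0)"

lemma basis_poly_pure:
  assumes "a \<in> partition_mults n n"
  shows "basis_poly n a (a', \<lambda>_. 0) = (if a' = a then 1 else 0)"
proof (cases "a' = a")
  case False
  then have "\<not> (\<forall>i. a' i + 0 = a i)" by auto
  then show ?thesis using False by (simp add: basis_poly_def)
qed (use assms in \<open>simp add: basis_poly_def pure_mem_wmonoms_iff\<close>)

lemma bij_betw_PiE_split_exponents:
  assumes a: "a \<in> partition_mults n n"
  defines "ext k \<equiv> (\<lambda>i. if i \<in> {1..n} then k i else 0)"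
  shows "bij_betw (\<lambda>k. (\<lambda>i. a i - ext k i, ext k)) (PiE {1..n} (\<lambda>i. {..a i}))
           {m \<in> wmonoms n. \<forall>i. fst m i + snd m i = a i}"
proof (rule bij_betw_byWitness[where f' = "\<lambda>m. restrict (snd m) {1..n}"])
  have asupp: "i \<notin> {1..n} \<Longrightarrow> a i = 0" and asum: "(\<Sum>i=1..n. i * a i) = n" for i
    using a by (auto simp: partition_mults_def)
  show "(\<lambda>k. (\<lambda>i. a i - ext k i, ext k)) ` PiE {1..n} (\<lambda>i. {..a i}) \<subseteq>
      {m \<in> wmonoms n. \<forall>i. fst m i + snd m i = a i}"
  proof (rule image_subsetI)
    fix k assume k: "k \<in> PiE {1..n} (\<lambda>i. {..a i})"
    then have split_sum: "a i - ext k i + ext k i = a i" for i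
      using asupp by (auto simp: ext_def PiE_iff)
    then have "(\<Sum>i=1..n. i * (a i - ext k i + ext k i)) = n"
      by (simp only: split_sum asum)
    then show "(\<lambda>i. a i - ext k i, ext k) \<in> {m \<in> wmonoms n. \<forall>i. fst m i + snd m i = a i}"
      using asupp split_sum by (simp add: wmonoms_def) (simp add: ext_def)
  qed
  show "\<forall>m\<in>{m \<in> wmonoms n. \<forall>i. fst m i + snd m i = a i}.
      (\<lambda>i. a i - ext (restrict (snd m) {1..n}) i, ext (restrict (snd m) {1..n})) = m"
  proof
    fix m assume m: "m \<in> {m \<in> wmonoms n. \<forall>i. fst m i + snd m i = a i}"
    then have "ext (restrict (snd m) {1..n}) = snd m"
      by (auto simp: ext_def wmonoms_def fun_eq_iff split: prod.splits)
    moreover have "a i - snd m i = fst m i" for i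
      using m by (metis (mono_tags, lifting) add_diff_cancel_right' mem_Collect_eq)
    ultimately show "(\<lambda>i. a i - ext (restrict (snd m) {1..n}) i, ext (restrict (snd m) {1..n})) = m"
      by (simp add: prod_eq_iff)
  qed
  show "(\<lambda>m. restrict (snd m) {1..n}) ` {m \<in> wmonoms n. \<forall>i. fst m i + snd m i = a i} \<subseteq>
      PiE {1..n} (\<lambda>i. {..a i})"
    by (auto simp: restrict_PiE_iff) (metis le_add2)
qed (auto simp: ext_def restrict_def PiE_def extensional_def fun_eq_iff)

lemma peval_basis_poly:
  assumes a: "a \<in> partition_mults n n"
  shows "peval n (basis_poly n a) \<xi> \<eta> = (\<Prod>i=1..n. (\<xi> i - (-1) ^ i * \<eta> i) ^ a i)"
proof -
  define ext where "ext k = (\<lambda>i. if i \<in> {1..n} then k i else 0)" for k :: "nat \<Rightarrow> nat"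
  define split where "split k = (\<lambda>i. a i - ext k i, ext k)" for k
  define f where "f i c = of_nat (a i choose c) * (- ((-1) ^ i)) ^ c * \<eta> i ^ c * \<xi> i ^ (a i - c)"
    for i c
  let ?P = "PiE {1..n} (\<lambda>i. {..a i})" and ?mon = "\<lambda>m. \<Prod>i=1..n. \<xi> i ^ fst m i * \<eta> i ^ snd m i"
  have "(\<xi> i - (-1) ^ i * \<eta> i) ^ a i = (\<Sum>c\<le>a i. f i c)" for i
  proof -
    have "\<xi> i - (-1) ^ i * \<eta> i = - ((-1) ^ i) * \<eta> i + \<xi> i" by simp
    then show ?thesis unfolding f_def by (simp only: binomial_ring power_mult_distrib mult.assoc)
  qed
  then have "(\<Prod>i=1..n. (\<xi> i - (-1) ^ i * \<eta> i) ^ a i) = (\<Prod>i=1..n. \<Sum>c\<le>a i. f i c)"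
    by simp
  also have "\<dots> = (\<Sum>k\<in>?P. \<Prod>i=1..n. f i (k i))"
    by (rule prod_sum_PiE) auto
  also have "\<dots> = (\<Sum>k\<in>?P. basis_poly n a (split k) * ?mon (split k))"
  proof (intro sum.cong refl)
    fix k assume k: "k \<in> ?P"
    have "split k \<in> wmonoms n \<and> (\<forall>i. fst (split k) i + snd (split k) i = a i)"
      using bij_betw_apply[OF bij_betw_PiE_split_exponents[OF a] k] by (simp add: split_def ext_def)
    then show "(\<Prod>i=1..n. f i (k i)) = basis_poly n a (split k) * ?mon (split k)"
      by (simp add: basis_poly_def split_def ext_def f_def prod.distrib[symmetric]
          mult_ac)
  qed
  also have "\<dots> = (\<Sum>m\<in>{m \<in> wmonoms n. \<forall>i. fst m i + snd m i = a i}. basis_poly n a m * ?mon m)"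
    unfolding split_def ext_def by (rule sum.reindex_bij_betw[OF bij_betw_PiE_split_exponents[OF a]])
  also have "\<dots> = peval n (basis_poly n a) \<xi> \<eta>"
    unfolding peval_def by (rule sum.mono_neutral_left) (auto simp: finite_wmonoms basis_poly_def)
  finally show ?thesis by simp
qed

lemma basis_poly_mem_Pspace:
  assumes a: "a \<in> partition_mults n n"
  shows "basis_poly n a \<in> Pspace n"
  unfolding Pspace_iff
proof safe
  fix m assume "m \<notin> wmonoms n"
  then show "basis_poly n a m = 0" by (simp add: basis_poly_def)
next
  fix X Y x
  have "psum i (X @ [- x]) - (-1) ^ i * psum i (x # Y) = psum i X - (-1) ^ i * psum i Y" for i
    by (simp add: psum_append psum_Cons psum_Nil power_minus[of x] algebra_simps)
  then show "Pev n (basis_poly n a) (X @ [- x]) (x # Y) = Pev n (basis_poly n a) X Y"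
    by (simp add: Pev_eq_peval peval_basis_poly[OF a])
qed

lemma sum_fun_apply: "(\<Sum>a\<in>A. f a) x = (\<Sum>a\<in>A. f a x)"
  by (induction A rule: infinite_finite_induct) auto

interpretation coeff_fun: vector_space "\<lambda>(c :: complex) (f :: monom \<Rightarrow> complex) x. c * f x"
  by unfold_locales (auto simp: fun_eq_iff algebra_simps)

lemma subspace_Pspace: "coeff_fun.subspace (Pspace n)"
proof -
  have "Pev n (p + q) X Y = Pev n p X Y + Pev n q X Y" for p q X Y
    by (simp add: Pev_def sum.distrib distrib_right)
  moreover have "Pev n (\<lambda>x. c * p x) X Y = c * Pev n p X Y" for c p X Y
    by (simp add: Pev_def sum_distrib_left mult.assoc)
  moreover have "Pev n 0 X Y = 0" for X Y
    by (simp add: Pev_def)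
  ultimately show ?thesis
    unfolding coeff_fun.subspace_def by (auto simp: Pspace_iff)
qed

lemma span_basis_poly: "coeff_fun.span (basis_poly n ` partition_mults n n) = Pspace n"
proof
  have "basis_poly n ` partition_mults n n \<subseteq> Pspace n"
    using basis_poly_mem_Pspace by blast
  then show span: "coeff_fun.span (basis_poly n ` partition_mults n n) \<subseteq> Pspace n"
    by (rule coeff_fun.span_minimal[OF _ subspace_Pspace])
  show "Pspace n \<subseteq> coeff_fun.span (basis_poly n ` partition_mults n n)"
  proof
    fix p assume p: "p \<in> Pspace n"
    define s where "s = (\<Sum>a\<in>partition_mults n n. (\<lambda>x. p (a, \<lambda>_. 0) * basis_poly n a x))"
    have s_span: "s \<in> coeff_fun.span (basis_poly n ` partition_mults n n)"
      unfolding s_def by (intro coeff_fun.span_sum coeff_fun.span_scale coeff_fun.span_base) auto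
    have "(p - s) (a', \<lambda>_. 0) = 0" for a'
    proof -
      have "s (a', \<lambda>_. 0) = (\<Sum>a\<in>partition_mults n n. if a' = a then p (a, \<lambda>_. 0) else 0)"
        unfolding s_def sum_fun_apply by (intro sum.cong refl) (simp add: basis_poly_pure)
      also have "\<dots> = p (a', \<lambda>_. 0)"
        using p pure_mem_wmonoms_iff[of a' n] by (auto simp: Pspace_iff finite_partition_mults)
      finally show ?thesis by simp
    qed
    moreover have "p - s \<in> Pspace n"
      using coeff_fun.subspace_diff[OF subspace_Pspace p] s_span span by blast
    ultimately have "p = s" using Pspace_eq_0 by fastforce
    then show "p \<in> coeff_fun.span (basis_poly n ` partition_mults n n)" using s_span by simp
  qed
qed

lemma inj_on_basis_poly: "inj_on (basis_poly n) (partition_mults n n)"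
proof (rule inj_onI)
  fix a a'
  assume "a \<in> partition_mults n n" "a' \<in> partition_mults n n" "basis_poly n a = basis_poly n a'"
  then show "a = a'"
    using basis_poly_pure[of a n a] basis_poly_pure[of a' n a] by (auto split: if_splits)
qed

lemma independent_basis_poly: "coeff_fun.independent (basis_poly n ` partition_mults n n)"
proof
  assume "coeff_fun.dependent (basis_poly n ` partition_mults n n)"
  then obtain u where u: "\<exists>v\<in>basis_poly n ` partition_mults n n. u v \<noteq> 0"
    and s: "(\<Sum>v\<in>basis_poly n ` partition_mults n n. (\<lambda>x. u v * v x)) = 0"
    using coeff_fun.dependent_finite[of "basis_poly n ` partition_mults n n"] finite_partition_mults
    by auto
  obtain a where a: "a \<in> partition_mults n n" and ua: "u (basis_poly n a) \<noteq> 0" using u by blast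
  have "0 = (\<Sum>v\<in>basis_poly n ` partition_mults n n. u v * v (a, \<lambda>_. 0))"
    using fun_cong[OF s, of "(a, \<lambda>_. 0)"] by (simp add: sum_fun_apply)
  also have "\<dots> = (\<Sum>a'\<in>partition_mults n n. u (basis_poly n a') * basis_poly n a' (a, \<lambda>_. 0))"
    by (simp add: sum.reindex[OF inj_on_basis_poly])
  also have "\<dots> = (\<Sum>a'\<in>partition_mults n n. if a = a' then u (basis_poly n a') else 0)"
    by (intro sum.cong refl) (simp add: basis_poly_pure)
  also have "\<dots> = u (basis_poly n a)"
    using a by (simp add: finite_partition_mults)
  finally show False using ua by simp
qed

lemma cdim_Pspace: "cdim (Pspace n) = card (partition_mults n n)"
proof -
  have "cdim (Pspace n) = card (basis_poly n ` partition_mults n n)"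
    unfolding cdim_def span_basis_poly[symmetric]
    by (rule coeff_fun.dim_span_eq_card_independent[OF independent_basis_poly])
  also have "\<dots> = card (partition_mults n n)"
    by (rule card_image[OF inj_on_basis_poly])
  finally show ?thesis .
qed

theorem theorem1:
  shows "(\<lambda>m. \<Prod>k=1..m. inverse (1 - fps_X ^ k :: complex fps))
           \<longlonglongrightarrow> Abs_fps (\<lambda>n. of_nat (cdim (Pspace n)))"
  using partition_product_tendsto by (simp add: cdim_Pspace)
end
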